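(* Let $\Omega\subset\mathbb{R}^d$, let $\Phi$ be such that $K(x,y)=\Phi(x-y)$ is a symmetric positive definite kernel on $\Omega$, let $x_1,\dots,x_n\in\Omega$ be distinct, $y_1,\dots,y_n\in\mathbb{R}$, $\lambda>0$, let $\Theta$ be a parameter set and $y^s:\Omega\times\Theta\to\mathbb{R}$. Write $\mathbf{\Phi}=(\Phi(x_i-x_j))_{ij}$, $Y=(y_1,\dots,y_n)^T$, $y^s(X;\theta)=(y^s(x_1,\theta),\dots,y^s(x_n,\theta))^T$, $\zeta^\theta_i=y_i-y^s(x_i,\theta)$, and $$\hat\zeta^\theta=\operatorname*{argmin}_{g\in\mathcal{N}_\Phi(\Omega)}\frac1n\sum_{i=1}^n(\zeta_i^\theta-g(x_i))^2+\lambda\|g\|^2_{\mathcal{N}_\Phi(\Omega)}.$$ Then $$\operatorname*{argmin}_{\theta\in\Theta}(Y-y^s(X;\theta))^T(\mathbf{\Phi}+n\lambda I_n)^{-1}(Y-y^s(X;\theta))=\operatorname*{argmin}_{\theta\in\Theta}\frac1n\sum_{i=1}^n(\zeta_i^\theta-\hat\zeta^\theta(x_i))^2+\lambda\|\hat\zeta^\theta\|^2_{\mathcal{N}_\Phi(\Omega)},$$ i.e. the maximum likelihood estimator $\hat\theta$ defined by the left-hand side is characterized by the right-hand side.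
   Context: $\mathcal{N}_\Phi(\Omega)$ is the reproducing kernel Hilbert space: the completion of $\{\sum_{i=1}^n\beta_i\Phi(\cdot-x_i):\beta_i\in\mathbb{R},x_i\in\Omega\}$ under $\langle\sum_i\beta_i\Phi(\cdot-x_i),\sum_j\gamma_j\Phi(\cdot-x'_j)\rangle=\sum_{i,j}\beta_i\gamma_j\Phi(x_i-x'_j)$. *)

theory Defs
  imports "HOL-Analysis.Analysis"
begin

text \<open>Elements of the pre-Hilbert space span of translates of Phi are represented by
  finitely supported coefficient functions c with support (the centres) inside Omega.\<close>

definition csupp :: "('a \<Rightarrow> real) \<Rightarrow> 'a set" where
  "csupp c = {z. c z \<noteq> 0}"

definition fs_coeff :: "'a set \<Rightarrow> ('a \<Rightarrow> real) \<Rightarrow> bool" where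
  "fs_coeff \<Omega> c \<longleftrightarrow> finite (csupp c) \<and> csupp c \<subseteq> \<Omega>"

definition kfun :: "('a::real_vector \<Rightarrow> real) \<Rightarrow> ('a \<Rightarrow> real) \<Rightarrow> 'a \<Rightarrow> real" where
  "kfun \<Phi> c = (\<lambda>x. \<Sum>z\<in>csupp c. c z * \<Phi> (x - z))"

definition knorm2 :: "('a::real_vector \<Rightarrow> real) \<Rightarrow> ('a \<Rightarrow> real) \<Rightarrow> real" where
  "knorm2 \<Phi> c = (\<Sum>z\<in>csupp c. \<Sum>w\<in>csupp c. c z * c w * \<Phi> (z - w))"

definition pd_kernel_on :: "'a::real_vector set \<Rightarrow> ('a \<Rightarrow> real) \<Rightarrow> bool" where
  "pd_kernel_on \<Omega> \<Phi> \<longleftrightarrow>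
     (\<forall>c. fs_coeff \<Omega> c \<and> csupp c \<noteq> {} \<longrightarrow> knorm2 \<Phi> c > 0)"

text \<open>s is a Cauchy sequence in the pre-Hilbert space whose pointwise limit on Omega is f
  (this realises the completion as a space of functions on Omega).\<close>
definition native_approx ::
  "'a::real_vector set \<Rightarrow> ('a \<Rightarrow> real) \<Rightarrow> ('a \<Rightarrow> real) \<Rightarrow> (nat \<Rightarrow> 'a \<Rightarrow> real) \<Rightarrow> bool" where
  "native_approx \<Omega> \<Phi> f s \<longleftrightarrow>
     (\<forall>k. fs_coeff \<Omega> (s k)) \<and>
     (\<forall>e>0. \<exists>N. \<forall>k\<ge>N. \<forall>m\<ge>N. knorm2 \<Phi> (s k - s m) < e) \<and>
     (\<forall>x\<in>\<Omega>. (\<lambda>k. kfun \<Phi> (s k) x) \<longlonglongrightarrow> f x)"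

definition native_space :: "'a::real_vector set \<Rightarrow> ('a \<Rightarrow> real) \<Rightarrow> ('a \<Rightarrow> real) set" where
  "native_space \<Omega> \<Phi> = {f. \<exists>s. native_approx \<Omega> \<Phi> f s}"

definition native_norm :: "'a::real_vector set \<Rightarrow> ('a \<Rightarrow> real) \<Rightarrow> ('a \<Rightarrow> real) \<Rightarrow> real" where
  "native_norm \<Omega> \<Phi> f =
     (SOME r. \<exists>s. native_approx \<Omega> \<Phi> f s \<and> (\<lambda>k. sqrt (knorm2 \<Phi> (s k))) \<longlonglongrightarrow> r)"

definition reg_obj ::
  "'a::real_vector set \<Rightarrow> ('a \<Rightarrow> real) \<Rightarrow> ('n::finite \<Rightarrow> 'a) \<Rightarrow> real \<Rightarrow> ('n \<Rightarrow> real)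
     \<Rightarrow> ('a \<Rightarrow> real) \<Rightarrow> real" where
  "reg_obj \<Omega> \<Phi> x lam z g =
     (1 / real CARD('n)) * (\<Sum>i\<in>UNIV. (z i - g (x i))^2) + lam * (native_norm \<Omega> \<Phi> g)^2"

definition reg_min ::
  "'a::real_vector set \<Rightarrow> ('a \<Rightarrow> real) \<Rightarrow> ('n::finite \<Rightarrow> 'a) \<Rightarrow> real \<Rightarrow> ('n \<Rightarrow> real)
     \<Rightarrow> ('a \<Rightarrow> real)" where
  "reg_min \<Omega> \<Phi> x lam z =
     (SOME g. g \<in> native_space \<Omega> \<Phi> \<and>
        (\<forall>h\<in>native_space \<Omega> \<Phi>. reg_obj \<Omega> \<Phi> x lam z g \<le> reg_obj \<Omega> \<Phi> x lam z h))"

definition argmins_on :: "'b set \<Rightarrow> ('b \<Rightarrow> real) \<Rightarrow> 'b set" where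
  "argmins_on \<Theta> F = {t\<in>\<Theta>. \<forall>t'\<in>\<Theta>. F t \<le> F t'}"

end

theory Submission
  imports Defs
begin

text \<open>
  The
  expansion g_a with weights a = (Phi + n lam I)^-1 z at the data sites has residuals
  z_i - g_a(x_i) = n lam a_i, so in the expansion of the objective at g_a + h all cross terms
  cancel; g_a is therefore the minimiser, with value lam z^T (Phi + n lam I)^-1 z. Every element
  of the native space is a pointwise limit of kernel expansions whose norms converge to its
  native norm, and by Cauchy-Schwarz this limit does not depend on the approximating sequence.
  Hence the same value bounds the objective from below on the whole native space and is attained
  by g_a. For z = zeta^theta the minimal value is thus lam times the likelihood quadratic form,
  and multiplying by lam > 0 does not change the argmin over theta.
\<close>

abbreviation knorm :: "('a::real_vector \<Rightarrow> real) \<Rightarrow> ('a \<Rightarrow> real) \<Rightarrow> real" where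
  "knorm \<Phi> c \<equiv> sqrt (knorm2 \<Phi> c)"

definition kinner :: "('a::real_vector \<Rightarrow> real) \<Rightarrow> ('a \<Rightarrow> real) \<Rightarrow> ('a \<Rightarrow> real) \<Rightarrow> real" where
  "kinner \<Phi> c d = (\<Sum>z\<in>csupp c. c z * kfun \<Phi> d z)"

definition kernel_cauchy :: "'a::real_vector set \<Rightarrow> ('a \<Rightarrow> real) \<Rightarrow> (nat \<Rightarrow> 'a \<Rightarrow> real) \<Rightarrow> bool" where
  "kernel_cauchy \<Omega> \<Phi> s \<longleftrightarrow> (\<forall>k. fs_coeff \<Omega> (s k)) \<and>
     (\<forall>e>0. \<exists>N. \<forall>k\<ge>N. \<forall>m\<ge>N. knorm2 \<Phi> (s k - s m) < e)"

lemma native_approx_iff: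
  "native_approx \<Omega> \<Phi> f s \<longleftrightarrow> kernel_cauchy \<Omega> \<Phi> s \<and> (\<forall>u\<in>\<Omega>. (\<lambda>k. kfun \<Phi> (s k) u) \<longlonglongrightarrow> f u)"
  by (auto simp: native_approx_def kernel_cauchy_def)

lemma sum_csupp_superset:
  assumes "finite S" "csupp c \<subseteq> S"
  shows "(\<Sum>z\<in>csupp c. c z * f z) = (\<Sum>z\<in>S. c z * f z)"
  using assms by (intro sum.mono_neutral_left) (auto simp: csupp_def)

lemma kfun_superset:
  assumes "finite S" "csupp c \<subseteq> S"
  shows "kfun \<Phi> c u = (\<Sum>z\<in>S. c z * \<Phi> (u - z))"
  unfolding kfun_def using sum_csupp_superset[OF assms] .

lemma kinner_superset:
  assumes "finite S" "csupp c \<subseteq> S"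
  shows "kinner \<Phi> c d = (\<Sum>z\<in>S. c z * kfun \<Phi> d z)"
  unfolding kinner_def using sum_csupp_superset[OF assms] .

lemma knorm2_eq_kinner: "knorm2 \<Phi> c = kinner \<Phi> c c"
  unfolding knorm2_def kinner_def kfun_def by (simp add: sum_distrib_left mult.assoc)

lemma knorm2_minus_commute: "knorm2 \<Phi> (c - d) = knorm2 \<Phi> (d - c)"
proof -
  have "csupp (c - d) = csupp (d - c)" by (auto simp: csupp_def)
  then show ?thesis unfolding knorm2_def by (simp add: algebra_simps)
qed

lemma csupp_add_scale: "csupp (\<lambda>z. c z + t * d z) \<subseteq> csupp c \<union> csupp d"
  by (auto simp: csupp_def)

lemma csupp_diff: "csupp (c - d) \<subseteq> csupp c \<union> csupp d"
  by (auto simp: csupp_def)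

lemma fs_coeff_add_scale:
  "fs_coeff \<Omega> c \<Longrightarrow> fs_coeff \<Omega> d \<Longrightarrow> fs_coeff \<Omega> (\<lambda>z. c z + t * d z)"
  unfolding fs_coeff_def using csupp_add_scale[of c t d]
  by (meson finite_UnI finite_subset le_sup_iff order_trans)

lemma fs_coeff_diff: "fs_coeff \<Omega> c \<Longrightarrow> fs_coeff \<Omega> d \<Longrightarrow> fs_coeff \<Omega> (c - d)"
  unfolding fs_coeff_def using csupp_diff[of c d]
  by (meson finite_UnI finite_subset le_sup_iff order_trans)

lemma kfun_add_scale:
  assumes "finite (csupp c)" "finite (csupp d)"
  shows "kfun \<Phi> (\<lambda>z. c z + t * d z) u = kfun \<Phi> c u + t * kfun \<Phi> d u"
proof -
  have S: "finite (csupp c \<union> csupp d)" using assms by simp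
  show ?thesis
    unfolding kfun_superset[OF S csupp_add_scale] kfun_superset[OF S Un_upper1]
      kfun_superset[OF S Un_upper2]
    by (simp add: sum.distrib sum_distrib_left algebra_simps)
qed

lemma kfun_diff:
  assumes "finite (csupp c)" "finite (csupp d)"
  shows "kfun \<Phi> (c - d) u = kfun \<Phi> c u - kfun \<Phi> d u"
proof -
  have S: "finite (csupp c \<union> csupp d)" using assms by simp
  show ?thesis
    unfolding kfun_superset[OF S csupp_diff] kfun_superset[OF S Un_upper1]
      kfun_superset[OF S Un_upper2]
    by (simp add: sum_subtractf left_diff_distrib)
qed

lemma kinner_diff_right:
  assumes "finite (csupp d)" "finite (csupp e)"
  shows "kinner \<Phi> c (d - e) = kinner \<Phi> c d - kinner \<Phi> c e"
  unfolding kinner_def kfun_diff[OF assms] by (simp add: sum_subtractf right_diff_distrib)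

lemma native_approx_kfun:
  assumes "fs_coeff \<Omega> c"
  shows "native_approx \<Omega> \<Phi> (kfun \<Phi> c) (\<lambda>k. c)"
proof -
  have "csupp (c - c) = {}" by (simp add: csupp_def)
  then show ?thesis using assms by (simp add: native_approx_def knorm2_def)
qed

locale pd_translation_kernel =
  fixes \<Omega> :: "'a::real_vector set" and \<Phi> :: "'a \<Rightarrow> real"
  assumes sym: "\<forall>u\<in>\<Omega>. \<forall>v\<in>\<Omega>. \<Phi> (u - v) = \<Phi> (v - u)"
    and pd: "pd_kernel_on \<Omega> \<Phi>"
begin

lemma kinner_commute:
  assumes c: "fs_coeff \<Omega> c" and d: "fs_coeff \<Omega> d"
  shows "kinner \<Phi> c d = kinner \<Phi> d c"
proof -
  have "kinner \<Phi> c d = (\<Sum>z\<in>csupp c. \<Sum>w\<in>csupp d. c z * d w * \<Phi> (z - w))"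
    unfolding kinner_def kfun_def by (simp add: sum_distrib_left mult.assoc)
  also have "\<dots> = (\<Sum>w\<in>csupp d. \<Sum>z\<in>csupp c. c z * d w * \<Phi> (z - w))"
    by (rule sum.swap)
  also have "\<dots> = (\<Sum>w\<in>csupp d. \<Sum>z\<in>csupp c. d w * c z * \<Phi> (w - z))"
  proof (intro sum.cong refl)
    fix w z assume "w \<in> csupp d" "z \<in> csupp c"
    then have "w \<in> \<Omega>" "z \<in> \<Omega>" using c d by (auto simp: fs_coeff_def)
    then show "c z * d w * \<Phi> (z - w) = d w * c z * \<Phi> (w - z)" using sym by simp
  qed
  also have "\<dots> = kinner \<Phi> d c"
    unfolding kinner_def kfun_def by (simp add: sum_distrib_left mult.assoc)
  finally show ?thesis .
qed

lemma knorm2_nonneg: "fs_coeff \<Omega> c \<Longrightarrow> 0 \<le> knorm2 \<Phi> c"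
  using pd unfolding pd_kernel_on_def
  by (cases "csupp c = {}") (auto simp: knorm2_def less_imp_le)

lemma knorm2_add_scale:
  assumes c: "fs_coeff \<Omega> c" and d: "fs_coeff \<Omega> d"
  shows "knorm2 \<Phi> (\<lambda>z. c z + t * d z) = knorm2 \<Phi> c + 2 * t * kinner \<Phi> c d + t\<^sup>2 * knorm2 \<Phi> d"
proof -
  have fc: "finite (csupp c)" and fd: "finite (csupp d)" using c d by (auto simp: fs_coeff_def)
  have S: "finite (csupp c \<union> csupp d)" using fc fd by simp
  have "knorm2 \<Phi> (\<lambda>z. c z + t * d z)
      = (\<Sum>z\<in>csupp c \<union> csupp d. (c z + t * d z) * (kfun \<Phi> c z + t * kfun \<Phi> d z))"
    unfolding knorm2_eq_kinner kinner_superset[OF S csupp_add_scale] kfun_add_scale[OF fc fd] ..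
  also have "\<dots> = kinner \<Phi> c c + t * kinner \<Phi> c d + t * kinner \<Phi> d c + t\<^sup>2 * kinner \<Phi> d d"
    unfolding kinner_superset[OF S Un_upper1] kinner_superset[OF S Un_upper2]
    by (simp add: sum.distrib sum_distrib_left algebra_simps power2_eq_square)
  finally show ?thesis
    using kinner_commute[OF c d] by (simp add: knorm2_eq_kinner)
qed

lemma kinner_Cauchy_Schwarz:
  assumes c: "fs_coeff \<Omega> c" and d: "fs_coeff \<Omega> d"
  shows "\<bar>kinner \<Phi> c d\<bar> \<le> knorm \<Phi> c * knorm \<Phi> d"
proof -
  have "(kinner \<Phi> c d)\<^sup>2 \<le> knorm2 \<Phi> c * knorm2 \<Phi> d"
  proof (cases "csupp d = {}")
    case True
    then have "kinner \<Phi> c d = 0" by (simp add: kinner_def kfun_def)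
    then show ?thesis using knorm2_nonneg[OF c] knorm2_nonneg[OF d] by simp
  next
    case False
    then have D: "knorm2 \<Phi> d > 0" using pd d unfolding pd_kernel_on_def by blast
    let ?t = "- kinner \<Phi> c d / knorm2 \<Phi> d"
    have "0 \<le> knorm2 \<Phi> (\<lambda>z. c z + ?t * d z)"
      by (rule knorm2_nonneg[OF fs_coeff_add_scale[OF c d]])
    also have "\<dots> = knorm2 \<Phi> c - (kinner \<Phi> c d)\<^sup>2 / knorm2 \<Phi> d"
      unfolding knorm2_add_scale[OF c d] using D by (simp add: field_simps power2_eq_square)
    finally show ?thesis using D by (simp add: field_simps)
  qed
  then have "sqrt ((kinner \<Phi> c d)\<^sup>2) \<le> sqrt (knorm2 \<Phi> c * knorm2 \<Phi> d)"
    by (rule real_sqrt_le_mono)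
  then show ?thesis by (simp add: real_sqrt_mult)
qed

lemma knorm_add_le:
  assumes c: "fs_coeff \<Omega> c" and d: "fs_coeff \<Omega> d"
  shows "knorm \<Phi> (\<lambda>z. c z + d z) \<le> knorm \<Phi> c + knorm \<Phi> d"
proof -
  have "knorm2 \<Phi> (\<lambda>z. c z + d z) \<le> (knorm \<Phi> c + knorm \<Phi> d)\<^sup>2"
    using knorm2_add_scale[OF c d, of 1] kinner_Cauchy_Schwarz[OF c d]
      knorm2_nonneg[OF c] knorm2_nonneg[OF d]
    by (simp add: power2_sum)
  then have "knorm \<Phi> (\<lambda>z. c z + d z) \<le> sqrt ((knorm \<Phi> c + knorm \<Phi> d)\<^sup>2)"
    by (rule real_sqrt_le_mono)
  then show ?thesis using knorm2_nonneg[OF c] knorm2_nonneg[OF d] by simp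
qed

lemma knorm_diff_le:
  assumes a: "fs_coeff \<Omega> a" and b: "fs_coeff \<Omega> b"
  shows "\<bar>knorm \<Phi> a - knorm \<Phi> b\<bar> \<le> knorm \<Phi> (a - b)"
proof -
  have "knorm \<Phi> a \<le> knorm \<Phi> b + knorm \<Phi> (a - b)"
    using knorm_add_le[OF b fs_coeff_diff[OF a b]] by simp
  moreover have "knorm \<Phi> b \<le> knorm \<Phi> a + knorm \<Phi> (a - b)"
    using knorm_add_le[OF a fs_coeff_diff[OF b a]] knorm2_minus_commute[of \<Phi> a b] by simp
  ultimately show ?thesis by linarith
qed

lemma kernel_cauchy_knorm_convergent:
  assumes s: "kernel_cauchy \<Omega> \<Phi> s"
  shows "convergent (\<lambda>k. knorm \<Phi> (s k))"
proof -
  have "Cauchy (\<lambda>k. knorm \<Phi> (s k))"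
  proof (rule metric_CauchyI)
    fix e :: real assume e: "e > 0"
    then obtain N where N: "\<forall>k\<ge>N. \<forall>m\<ge>N. knorm2 \<Phi> (s k - s m) < e\<^sup>2"
      using s unfolding kernel_cauchy_def by (meson zero_less_power)
    show "\<exists>M. \<forall>m\<ge>M. \<forall>n\<ge>M. dist (knorm \<Phi> (s m)) (knorm \<Phi> (s n)) < e"
    proof (intro exI allI impI)
      fix m n assume "m \<ge> N" "n \<ge> N"
      then have "knorm \<Phi> (s m - s n) < e"
        using N e by (simp add: real_less_lsqrt)
      moreover have "\<bar>knorm \<Phi> (s m) - knorm \<Phi> (s n)\<bar> \<le> knorm \<Phi> (s m - s n)"
        using knorm_diff_le s unfolding kernel_cauchy_def by blast
      ultimately show "dist (knorm \<Phi> (s m)) (knorm \<Phi> (s n)) < e"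
        by (simp add: dist_real_def)
    qed
  qed
  then show ?thesis by (simp add: Cauchy_convergent_iff)
qed

lemma kernel_cauchy_diff:
  assumes s: "kernel_cauchy \<Omega> \<Phi> s" and t: "kernel_cauchy \<Omega> \<Phi> t"
  shows "kernel_cauchy \<Omega> \<Phi> (\<lambda>k. s k - t k)"
  unfolding kernel_cauchy_def
proof (intro conjI allI impI)
  have fs: "fs_coeff \<Omega> (s k)" "fs_coeff \<Omega> (t k)" for k
    using s t by (auto simp: kernel_cauchy_def)
  then show "fs_coeff \<Omega> (s k - t k)" for k by (simp add: fs_coeff_diff)
  fix e :: real assume "e > 0"
  then obtain N1 N2
    where N1: "\<forall>k\<ge>N1. \<forall>m\<ge>N1. knorm2 \<Phi> (s k - s m) < e / 4"
      and N2: "\<forall>k\<ge>N2. \<forall>m\<ge>N2. knorm2 \<Phi> (t k - t m) < e / 4"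
    using s t unfolding kernel_cauchy_def by (meson zero_less_divide_iff zero_less_numeral)
  show "\<exists>N. \<forall>k\<ge>N. \<forall>m\<ge>N. knorm2 \<Phi> ((s k - t k) - (s m - t m)) < e"
  proof (intro exI allI impI)
    fix k m assume "k \<ge> max N1 N2" "m \<ge> max N1 N2"
    have "(s k - t k) - (s m - t m) = (\<lambda>z. (s k - s m) z + (t m - t k) z)"
      by (simp add: fun_eq_iff)
    then have "knorm \<Phi> ((s k - t k) - (s m - t m))
        \<le> knorm \<Phi> (s k - s m) + knorm \<Phi> (t k - t m)"
      using knorm_add_le[OF fs_coeff_diff fs_coeff_diff, OF fs(1) fs(1) fs(2) fs(2)]
        knorm2_minus_commute[of \<Phi> "t k"] by simp
    also have "\<dots> < sqrt (e / 4) + sqrt (e / 4)"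
      using N1 N2 \<open>k \<ge> max N1 N2\<close> \<open>m \<ge> max N1 N2\<close> by (intro add_strict_mono) auto
    also have "\<dots> = sqrt e"
      by (simp add: real_sqrt_divide)
    finally show "knorm2 \<Phi> ((s k - t k) - (s m - t m)) < e" by simp
  qed
qed

lemma kinner_tendsto_zero:
  assumes c: "fs_coeff \<Omega> c" and pw: "\<forall>u\<in>\<Omega>. (\<lambda>k. kfun \<Phi> (d k) u) \<longlonglongrightarrow> 0"
  shows "(\<lambda>k. kinner \<Phi> c (d k)) \<longlonglongrightarrow> 0"
proof -
  have "(\<lambda>k. \<Sum>z\<in>csupp c. c z * kfun \<Phi> (d k) z) \<longlonglongrightarrow> (\<Sum>z\<in>csupp c. c z * 0)"
    using c pw by (intro tendsto_sum tendsto_mult tendsto_const) (auto simp: fs_coeff_def)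
  then show ?thesis by (simp add: kinner_def)
qed

lemma kernel_cauchy_tendsto_zero:
  assumes d: "kernel_cauchy \<Omega> \<Phi> d" and pw: "\<forall>u\<in>\<Omega>. (\<lambda>k. kfun \<Phi> (d k) u) \<longlonglongrightarrow> 0"
  shows "(\<lambda>k. knorm2 \<Phi> (d k)) \<longlonglongrightarrow> 0"
proof (rule LIMSEQ_I)
  fix r :: real assume r: "r > 0"
  have fs: "\<And>k. fs_coeff \<Omega> (d k)" using d by (simp add: kernel_cauchy_def)
  obtain M where M: "M > 0" "\<And>k. knorm \<Phi> (d k) \<le> M"
    using convergent_imp_Bseq[OF kernel_cauchy_knorm_convergent[OF d]]
    unfolding Bseq_def real_norm_def by (meson abs_le_D1)
  obtain N where N: "\<forall>k\<ge>N. \<forall>m\<ge>N. knorm2 \<Phi> (d k - d m) < (r / (2 * M))\<^sup>2"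
    using d r M unfolding kernel_cauchy_def by (meson zero_less_divide_iff zero_less_mult_iff
        zero_less_numeral zero_less_power)
  obtain K where K: "\<forall>k\<ge>K. \<bar>kinner \<Phi> (d N) (d k)\<bar> < r / 2"
    using LIMSEQ_D[OF kinner_tendsto_zero[OF fs pw], of "r / 2"] r by auto
  show "\<exists>K. \<forall>k\<ge>K. norm (knorm2 \<Phi> (d k) - 0) < r"
  proof (intro exI allI impI)
    fix k assume k: "k \<ge> max N K"
    have split: "knorm2 \<Phi> (d k) = kinner \<Phi> (d k) (d k - d N) + kinner \<Phi> (d N) (d k)"
      using kinner_diff_right[of "d k" "d N" \<Phi> "d k"] kinner_commute[OF fs fs] fs
      by (simp add: knorm2_eq_kinner fs_coeff_def)
    have "knorm \<Phi> (d k - d N) \<le> r / (2 * M)"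
      using N k r M by (intro real_le_lsqrt less_imp_le) auto
    then have "knorm \<Phi> (d k) * knorm \<Phi> (d k - d N) \<le> M * (r / (2 * M))"
      using M knorm2_nonneg[OF fs_coeff_diff[OF fs fs]] by (intro mult_mono) auto
    then have "\<bar>kinner \<Phi> (d k) (d k - d N)\<bar> \<le> r / 2"
      using kinner_Cauchy_Schwarz[OF fs fs_coeff_diff[OF fs fs], of k k N] M by simp
    moreover have "\<bar>kinner \<Phi> (d N) (d k)\<bar> < r / 2"
      using K k by simp
    ultimately show "norm (knorm2 \<Phi> (d k) - 0) < r"
      unfolding split real_norm_def diff_zero by linarith
  qed
qed

lemma native_approx_diff_tendsto_zero:
  assumes s: "native_approx \<Omega> \<Phi> f s" and t: "native_approx \<Omega> \<Phi> f t"
  shows "(\<lambda>k. knorm2 \<Phi> (s k - t k)) \<longlonglongrightarrow> 0"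
proof (rule kernel_cauchy_tendsto_zero)
  have s_cauchy: "kernel_cauchy \<Omega> \<Phi> s" and t_cauchy: "kernel_cauchy \<Omega> \<Phi> t"
    using s t by (simp_all add: native_approx_iff)
  then show "kernel_cauchy \<Omega> \<Phi> (\<lambda>k. s k - t k)"
    by (rule kernel_cauchy_diff)
  show "\<forall>u\<in>\<Omega>. (\<lambda>k. kfun \<Phi> (s k - t k) u) \<longlonglongrightarrow> 0"
  proof
    fix u assume "u \<in> \<Omega>"
    then have "(\<lambda>k. kfun \<Phi> (s k) u - kfun \<Phi> (t k) u) \<longlonglongrightarrow> f u - f u"
      using s t by (intro tendsto_diff) (simp_all add: native_approx_def)
    moreover have "finite (csupp (s k))" "finite (csupp (t k))" for k
      using s_cauchy t_cauchy by (simp_all add: kernel_cauchy_def fs_coeff_def)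
    ultimately show "(\<lambda>k. kfun \<Phi> (s k - t k) u) \<longlonglongrightarrow> 0"
      by (simp add: kfun_diff)
  qed
qed

lemma native_norm_tendsto:
  assumes s: "native_approx \<Omega> \<Phi> f s"
  shows "(\<lambda>k. knorm \<Phi> (s k)) \<longlonglongrightarrow> native_norm \<Omega> \<Phi> f"
proof -
  obtain r where "(\<lambda>k. knorm \<Phi> (s k)) \<longlonglongrightarrow> r"
    using s kernel_cauchy_knorm_convergent unfolding native_approx_iff convergent_def by blast
  then have "\<exists>r t. native_approx \<Omega> \<Phi> f t \<and> (\<lambda>k. knorm \<Phi> (t k)) \<longlonglongrightarrow> r"
    using s by blast
  then have "\<exists>t. native_approx \<Omega> \<Phi> f t
      \<and> (\<lambda>k. knorm \<Phi> (t k)) \<longlonglongrightarrow> native_norm \<Omega> \<Phi> f"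
    unfolding native_norm_def by (rule someI_ex)
  then obtain t where t: "native_approx \<Omega> \<Phi> f t"
    and tn: "(\<lambda>k. knorm \<Phi> (t k)) \<longlonglongrightarrow> native_norm \<Omega> \<Phi> f"
    by blast
  have fs: "fs_coeff \<Omega> (s k)" "fs_coeff \<Omega> (t k)" for k
    using s t by (simp_all add: native_approx_def)
  have "\<forall>k. norm (knorm \<Phi> (s k) - knorm \<Phi> (t k)) \<le> knorm \<Phi> (s k - t k)"
    using knorm_diff_le[OF fs] by simp
  moreover have "(\<lambda>k. knorm \<Phi> (s k - t k)) \<longlonglongrightarrow> 0"
    using tendsto_real_sqrt[OF native_approx_diff_tendsto_zero[OF s t]] by simp
  ultimately have "(\<lambda>k. knorm \<Phi> (s k) - knorm \<Phi> (t k)) \<longlonglongrightarrow> 0"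
    by (rule Lim_null_comparison[OF always_eventually])
  from tendsto_add[OF this tn] show ?thesis by simp
qed

lemma native_norm_kfun:
  assumes "fs_coeff \<Omega> c"
  shows "native_norm \<Omega> \<Phi> (kfun \<Phi> c) = knorm \<Phi> c"
  using native_norm_tendsto[OF native_approx_kfun[OF assms]] by (simp add: LIMSEQ_const_iff)

end

locale kernel_regression = pd_translation_kernel \<Omega> \<Phi>
  for \<Omega> :: "'a::real_vector set" and \<Phi> :: "'a \<Rightarrow> real" +
  fixes x :: "'n::finite \<Rightarrow> 'a" and lam :: real
  assumes inj_sites: "inj x" and sites_in: "range x \<subseteq> \<Omega>" and lam_pos: "lam > 0"
begin

definition vec_coeff :: "real^'n \<Rightarrow> 'a \<Rightarrow> real" where
  "vec_coeff v w = (if w \<in> range x then v $ inv x w else 0)"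

definition gram :: "real^'n^'n" where
  "gram = (\<chi> i j. \<Phi> (x i - x j))"

definition reg_gram :: "real^'n^'n" where
  "reg_gram = gram + (real CARD('n) * lam) *\<^sub>R mat 1"

definition rep_weights :: "('n \<Rightarrow> real) \<Rightarrow> real^'n" where
  "rep_weights z = matrix_inv reg_gram *v (\<chi> i. z i)"

definition coeff_reg_obj :: "('n \<Rightarrow> real) \<Rightarrow> ('a \<Rightarrow> real) \<Rightarrow> real" where
  "coeff_reg_obj z c =
     (1 / real CARD('n)) * (\<Sum>i\<in>UNIV. (z i - kfun \<Phi> c (x i))\<^sup>2) + lam * knorm2 \<Phi> c"

lemma finite_sites: "finite (range x)"
  by simp

lemma csupp_vec_coeff: "csupp (vec_coeff v) \<subseteq> range x"
  by (auto simp: csupp_def vec_coeff_def)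

lemma fs_coeff_vec_coeff: "fs_coeff \<Omega> (vec_coeff v)"
  using finite_sites csupp_vec_coeff[of v] sites_in unfolding fs_coeff_def
  by (meson finite_subset order_trans)

lemma vec_coeff_site [simp]: "vec_coeff v (x i) = v $ i"
  using inj_sites by (simp add: vec_coeff_def)

lemma sum_sites: "(\<Sum>w\<in>range x. f w) = (\<Sum>i\<in>UNIV. f (x i))"
  using sum.reindex[of x UNIV f] inj_sites by simp

lemma kinner_vec_coeff: "kinner \<Phi> (vec_coeff v) d = (\<Sum>i\<in>UNIV. v $ i * kfun \<Phi> d (x i))"
  unfolding kinner_superset[OF finite_sites csupp_vec_coeff] sum_sites by simp

lemma kfun_vec_coeff_site: "kfun \<Phi> (vec_coeff v) (x j) = (gram *v v) $ j"
  unfolding kfun_superset[OF finite_sites csupp_vec_coeff] sum_sites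
  by (simp add: gram_def matrix_vector_mult_def mult.commute)

lemma knorm2_vec_coeff: "knorm2 \<Phi> (vec_coeff v) = v \<bullet> (gram *v v)"
  by (simp add: knorm2_eq_kinner kinner_vec_coeff kfun_vec_coeff_site inner_vec_def)

lemma reg_gram_mult: "reg_gram *v v = gram *v v + (real CARD('n) * lam) *\<^sub>R v"
  unfolding reg_gram_def matrix_vector_mult_add_rdistrib
  by (metis matrix_vector_mul_lid scaleR_matrix_vector_assoc)

lemma reg_gram_invertible: "invertible reg_gram"
  unfolding invertible_left_inverse matrix_left_invertible_ker
proof (intro allI impI)
  fix v :: "real^'n" assume "reg_gram *v v = 0"
  then have "v \<bullet> (gram *v v) + (real CARD('n) * lam) * (v \<bullet> v) = 0"
    by (metis inner_add_right inner_scaleR_right inner_zero_right reg_gram_mult)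
  moreover have "v \<bullet> (gram *v v) \<ge> 0"
    using knorm2_nonneg[OF fs_coeff_vec_coeff] by (simp add: knorm2_vec_coeff)
  moreover have "real CARD('n) * lam > 0" using lam_pos by simp
  ultimately have "(real CARD('n) * lam) * (v \<bullet> v) = 0"
    by (simp add: add_nonneg_eq_0_iff)
  then show "v = 0" using lam_pos by simp
qed

lemma reg_gram_rep_weights: "reg_gram *v rep_weights z = (\<chi> i. z i)"
proof -
  have "reg_gram ** matrix_inv reg_gram = mat 1"
    using reg_gram_invertible unfolding invertible_def matrix_inv_def by (rule someI2_ex) auto
  then show ?thesis by (simp add: rep_weights_def matrix_vector_mul_assoc)
qed

lemma kfun_rep_weights_site:
  "kfun \<Phi> (vec_coeff (rep_weights z)) (x i) = z i - real CARD('n) * lam * rep_weights z $ i"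
  using arg_cong[OF reg_gram_rep_weights[of z], of "\<lambda>v. v $ i"]
  by (simp add: reg_gram_mult kfun_vec_coeff_site)

lemma coeff_reg_obj_rep_weights:
  "coeff_reg_obj z (vec_coeff (rep_weights z)) = lam * ((\<chi> i. z i) \<bullet> rep_weights z)"
proof -
  let ?n = "real CARD('n)" and ?a = "rep_weights z"
  have norm_a: "knorm2 \<Phi> (vec_coeff ?a)
      = (\<Sum>i\<in>UNIV. ?a $ i * z i) - ?n * lam * (\<Sum>i\<in>UNIV. (?a $ i)\<^sup>2)"
    by (simp add: knorm2_eq_kinner kinner_vec_coeff kfun_rep_weights_site algebra_simps
        power2_eq_square sum_subtractf sum_distrib_left)
  have data_a: "(\<Sum>i\<in>UNIV. (z i - kfun \<Phi> (vec_coeff ?a) (x i))\<^sup>2)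
      = ?n\<^sup>2 * lam\<^sup>2 * (\<Sum>i\<in>UNIV. (?a $ i)\<^sup>2)"
    by (simp add: kfun_rep_weights_site sum_distrib_left power_mult_distrib)
  have "coeff_reg_obj z (vec_coeff ?a) = (1 / ?n) * (?n\<^sup>2 * lam\<^sup>2 * (\<Sum>i\<in>UNIV. (?a $ i)\<^sup>2))
      + lam * ((\<Sum>i\<in>UNIV. ?a $ i * z i) - ?n * lam * (\<Sum>i\<in>UNIV. (?a $ i)\<^sup>2))"
    unfolding coeff_reg_obj_def data_a norm_a ..
  also have "\<dots> = lam * (\<Sum>i\<in>UNIV. ?a $ i * z i)"
    by (simp add: field_simps power2_eq_square)
  finally show ?thesis by (simp add: inner_vec_def mult.commute)
qed

(* The cross terms cancel because the residuals of vec_coeff (rep_weights z) at the sites are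
   n * lam times its weights (kfun_rep_weights_site). *)
lemma coeff_reg_obj_perturb:
  assumes d: "fs_coeff \<Omega> d"
  shows "coeff_reg_obj z (\<lambda>w. vec_coeff (rep_weights z) w + d w)
       = coeff_reg_obj z (vec_coeff (rep_weights z))
         + (1 / real CARD('n)) * (\<Sum>i\<in>UNIV. (kfun \<Phi> d (x i))\<^sup>2) + lam * knorm2 \<Phi> d"
proof -
  let ?n = "real CARD('n)" and ?a = "rep_weights z"
  let ?k = "\<lambda>i. kfun \<Phi> d (x i)"
  have fa: "finite (csupp (vec_coeff ?a))" and fd: "finite (csupp d)"
    using fs_coeff_vec_coeff d by (auto simp: fs_coeff_def)
  have kfun_sum: "kfun \<Phi> (\<lambda>w. vec_coeff ?a w + d w) (x i) = kfun \<Phi> (vec_coeff ?a) (x i) + ?k i"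
    for i
    using kfun_add_scale[OF fa fd, of \<Phi> 1] by simp
  have norm_sum: "knorm2 \<Phi> (\<lambda>w. vec_coeff ?a w + d w)
      = knorm2 \<Phi> (vec_coeff ?a) + 2 * (\<Sum>i\<in>UNIV. ?a $ i * ?k i) + knorm2 \<Phi> d"
    using knorm2_add_scale[OF fs_coeff_vec_coeff[of ?a] d, where t=1]
    by (simp add: kinner_vec_coeff)
  have "(\<Sum>i\<in>UNIV. (z i - kfun \<Phi> (\<lambda>w. vec_coeff ?a w + d w) (x i))\<^sup>2)
      = (\<Sum>i\<in>UNIV. (z i - kfun \<Phi> (vec_coeff ?a) (x i))\<^sup>2
          - 2 * ?n * lam * (?a $ i * ?k i) + (?k i)\<^sup>2)"
    unfolding kfun_sum kfun_rep_weights_site by (simp add: algebra_simps power2_eq_square)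
  also have "\<dots> = (\<Sum>i\<in>UNIV. (z i - kfun \<Phi> (vec_coeff ?a) (x i))\<^sup>2)
      - 2 * ?n * lam * (\<Sum>i\<in>UNIV. ?a $ i * ?k i) + (\<Sum>i\<in>UNIV. (?k i)\<^sup>2)"
    by (simp add: sum.distrib sum_subtractf sum_distrib_left)
  finally show ?thesis
    unfolding coeff_reg_obj_def norm_sum by (simp add: field_simps)
qed

lemma coeff_reg_obj_min:
  assumes c: "fs_coeff \<Omega> c"
  shows "coeff_reg_obj z (vec_coeff (rep_weights z)) \<le> coeff_reg_obj z c"
proof -
  let ?c = "vec_coeff (rep_weights z)"
  have d: "fs_coeff \<Omega> (c - ?c)" by (rule fs_coeff_diff[OF c fs_coeff_vec_coeff])
  have "c = (\<lambda>w. ?c w + (c - ?c) w)" by (simp add: fun_eq_iff)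
  then have "coeff_reg_obj z c = coeff_reg_obj z ?c
      + (1 / real CARD('n)) * (\<Sum>i\<in>UNIV. (kfun \<Phi> (c - ?c) (x i))\<^sup>2) + lam * knorm2 \<Phi> (c - ?c)"
    using coeff_reg_obj_perturb[OF d, of z] by metis
  moreover have "0 \<le> (\<Sum>i\<in>UNIV. (kfun \<Phi> (c - ?c) (x i))\<^sup>2)" by (simp add: sum_nonneg)
  moreover have "0 \<le> knorm2 \<Phi> (c - ?c)" by (rule knorm2_nonneg[OF d])
  ultimately show ?thesis using lam_pos by simp
qed

lemma reg_obj_kfun:
  assumes "fs_coeff \<Omega> c"
  shows "reg_obj \<Omega> \<Phi> x lam z (kfun \<Phi> c) = coeff_reg_obj z c"
  using knorm2_nonneg[OF assms]
  by (simp add: reg_obj_def coeff_reg_obj_def native_norm_kfun[OF assms])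

lemma reg_obj_lower_bound:
  assumes h: "h \<in> native_space \<Omega> \<Phi>"
  shows "coeff_reg_obj z (vec_coeff (rep_weights z)) \<le> reg_obj \<Omega> \<Phi> x lam z h"
proof -
  obtain s where s: "native_approx \<Omega> \<Phi> h s" using h by (auto simp: native_space_def)
  have fs: "fs_coeff \<Omega> (s k)" for k using s by (simp add: native_approx_def)
  have pw: "(\<lambda>k. kfun \<Phi> (s k) (x i)) \<longlonglongrightarrow> h (x i)" for i
    using s range_subsetD[OF sites_in] unfolding native_approx_def by blast
  have "(\<lambda>k. (1 / real CARD('n)) * (\<Sum>i\<in>UNIV. (z i - kfun \<Phi> (s k) (x i))\<^sup>2)
      + lam * (knorm \<Phi> (s k))\<^sup>2) \<longlonglongrightarrow> reg_obj \<Omega> \<Phi> x lam z h"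
    unfolding reg_obj_def by (intro tendsto_intros pw native_norm_tendsto[OF s])
  moreover have "(1 / real CARD('n)) * (\<Sum>i\<in>UNIV. (z i - kfun \<Phi> (s k) (x i))\<^sup>2)
      + lam * (knorm \<Phi> (s k))\<^sup>2 = coeff_reg_obj z (s k)" for k
    using knorm2_nonneg[OF fs] by (simp add: coeff_reg_obj_def)
  ultimately have "(\<lambda>k. coeff_reg_obj z (s k)) \<longlonglongrightarrow> reg_obj \<Omega> \<Phi> x lam z h" by simp
  then show ?thesis
    using coeff_reg_obj_min[OF fs] by (intro LIMSEQ_le_const) auto
qed

lemma reg_obj_reg_min:
  "reg_obj \<Omega> \<Phi> x lam z (reg_min \<Omega> \<Phi> x lam z) = lam * ((\<chi> i. z i) \<bullet> rep_weights z)"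
proof -
  let ?c = "vec_coeff (rep_weights z)"
  let ?P = "\<lambda>g. g \<in> native_space \<Omega> \<Phi> \<and>
        (\<forall>h\<in>native_space \<Omega> \<Phi>. reg_obj \<Omega> \<Phi> x lam z g \<le> reg_obj \<Omega> \<Phi> x lam z h)"
  have g_native: "kfun \<Phi> ?c \<in> native_space \<Omega> \<Phi>"
    using native_approx_kfun[OF fs_coeff_vec_coeff] by (auto simp: native_space_def)
  have g_val: "reg_obj \<Omega> \<Phi> x lam z (kfun \<Phi> ?c) = coeff_reg_obj z ?c"
    by (rule reg_obj_kfun[OF fs_coeff_vec_coeff])
  have "?P (kfun \<Phi> ?c)"
    using g_native g_val reg_obj_lower_bound by simp
  then have "?P (reg_min \<Omega> \<Phi> x lam z)"
    unfolding reg_min_def by (rule someI[of ?P])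
  then have "reg_obj \<Omega> \<Phi> x lam z (reg_min \<Omega> \<Phi> x lam z) = coeff_reg_obj z ?c"
    using g_native g_val reg_obj_lower_bound[of "reg_min \<Omega> \<Phi> x lam z" z]
    by (metis order_antisym)
  then show ?thesis by (simp add: coeff_reg_obj_rep_weights)
qed

end

lemma argmins_on_pos_scale:
  fixes F :: "'b \<Rightarrow> real"
  assumes "c > 0"
  shows "argmins_on \<Theta> (\<lambda>t. c * F t) = argmins_on \<Theta> F"
  using assms by (simp add: argmins_on_def)

theorem theorem3p1:
  fixes \<Omega> :: "'a::euclidean_space set" and \<Phi> :: "'a \<Rightarrow> real"
    and x :: "'n::finite \<Rightarrow> 'a" and y :: "'n \<Rightarrow> real" and lam :: real
    and \<Theta> :: "'b set" and ys :: "'a \<Rightarrow> 'b \<Rightarrow> real"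
  assumes sym: "\<forall>u\<in>\<Omega>. \<forall>v\<in>\<Omega>. \<Phi> (u - v) = \<Phi> (v - u)"
    and pd: "pd_kernel_on \<Omega> \<Phi>"
    and distinct: "inj x"
    and inO: "range x \<subseteq> \<Omega>"
    and lam: "lam > 0"
  shows "argmins_on \<Theta>
           (\<lambda>\<theta>. (\<chi> i. y i - ys (x i) \<theta>) \<bullet>
                 (matrix_inv ((\<chi> i j. \<Phi> (x i - x j)) + (real CARD('n) * lam) *\<^sub>R mat 1)
                    *v (\<chi> i. y i - ys (x i) \<theta>)))
       = argmins_on \<Theta>
           (\<lambda>\<theta>. reg_obj \<Omega> \<Phi> x lam (\<lambda>i. y i - ys (x i) \<theta>)
                   (reg_min \<Omega> \<Phi> x lam (\<lambda>i. y i - ys (x i) \<theta>)))"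
proof -
  interpret kernel_regression \<Omega> \<Phi> x lam
    using sym pd distinct inO lam by unfold_locales
  show ?thesis
    by (simp add: reg_obj_reg_min rep_weights_def reg_gram_def gram_def
        argmins_on_pos_scale[OF lam])
qed

end
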